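(* Let $\Sigma_1$ and $\Sigma_2$ be connected graphs (multiple edges allowed, no loops) with $n$ vertices each containing exactly one cycle. If $\Sigma_1^*\cong\Sigma_2^*$, then $\Sigma_1\cong\Sigma_2$.
   Context: A cycle may consist of two vertices joined by two parallel edges. For such a graph $\Sigma$, the dual graph $\Sigma^*$ has as vertices the edges of $\Sigma$; two vertices are joined by an edge if the corresponding edges have a common endpoint, except that if two edges of $\Sigma$ form a cycle (i.e., are parallel edges), the corresponding vertices of $\Sigma^*$ are joined by a dotted edge (a distinguished edge type). Isomorphisms of dual graphs preserve the edge types. *)

theory Defs
  imports Main
begin

text \<open>A finite multigraph without loops: vertex set V, edge set E (abstract edge
  identifiers, so parallel edges are allowed), and an incidence map giving each
  edge its set of two distinct endpoints.\<close>

definition multigraph :: "'v set \<Rightarrow> 'e set \<Rightarrow> ('e \<Rightarrow> 'v set) \<Rightarrow> bool" where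
  "multigraph V E ends \<longleftrightarrow> finite V \<and> finite E \<and>
     (\<forall>e\<in>E. ends e \<subseteq> V \<and> card (ends e) = 2)"

definition mg_adj :: "'e set \<Rightarrow> ('e \<Rightarrow> 'v set) \<Rightarrow> ('v \<times> 'v) set" where
  "mg_adj E ends = {(u, v). \<exists>e\<in>E. ends e = {u, v}}"

definition mg_connected :: "'v set \<Rightarrow> 'e set \<Rightarrow> ('e \<Rightarrow> 'v set) \<Rightarrow> bool" where
  "mg_connected V E ends \<longleftrightarrow> (\<forall>u\<in>V. \<forall>v\<in>V. (u, v) \<in> (mg_adj E ends)\<^sup>*)"

text \<open>A cycle is a nonempty set of edges forming a connected 2-regular subgraph
  (on the vertices it covers). Two parallel edges form a cycle of length 2.\<close>

definition mg_cycle :: "'e set \<Rightarrow> ('e \<Rightarrow> 'v set) \<Rightarrow> 'e set \<Rightarrow> bool" where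
  "mg_cycle E ends C \<longleftrightarrow> C \<subseteq> E \<and> C \<noteq> {} \<and>
     (\<forall>v\<in>\<Union>(ends ` C). card {e\<in>C. v \<in> ends e} = 2) \<and>
     mg_connected (\<Union>(ends ` C)) C ends"

definition unicyclic :: "'e set \<Rightarrow> ('e \<Rightarrow> 'v set) \<Rightarrow> bool" where
  "unicyclic E ends \<longleftrightarrow> (\<exists>!C. mg_cycle E ends C)"

text \<open>Dual graph: vertices are the edges E. Dotted edge between two distinct edges
  forming a cycle (parallel edges); ordinary edge between two distinct edges with a
  common endpoint that do not form a cycle.\<close>

definition dual_dotted :: "'e set \<Rightarrow> ('e \<Rightarrow> 'v set) \<Rightarrow> 'e \<Rightarrow> 'e \<Rightarrow> bool" where
  "dual_dotted E ends e f \<longleftrightarrow> e \<in> E \<and> f \<in> E \<and> e \<noteq> f \<and> mg_cycle E ends {e, f}"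

definition dual_solid :: "'e set \<Rightarrow> ('e \<Rightarrow> 'v set) \<Rightarrow> 'e \<Rightarrow> 'e \<Rightarrow> bool" where
  "dual_solid E ends e f \<longleftrightarrow> e \<in> E \<and> f \<in> E \<and> e \<noteq> f \<and>
     ends e \<inter> ends f \<noteq> {} \<and> \<not> mg_cycle E ends {e, f}"

definition dual_iso ::
  "'e set \<Rightarrow> ('e \<Rightarrow> 'v set) \<Rightarrow> 'f set \<Rightarrow> ('f \<Rightarrow> 'w set) \<Rightarrow> bool" where
  "dual_iso E1 ends1 E2 ends2 \<longleftrightarrow> (\<exists>\<phi>. bij_betw \<phi> E1 E2 \<and>
     (\<forall>e\<in>E1. \<forall>f\<in>E1.
        (dual_solid E1 ends1 e f \<longleftrightarrow> dual_solid E2 ends2 (\<phi> e) (\<phi> f)) \<and>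
        (dual_dotted E1 ends1 e f \<longleftrightarrow> dual_dotted E2 ends2 (\<phi> e) (\<phi> f))))"

definition mg_iso ::
  "'v set \<Rightarrow> 'e set \<Rightarrow> ('e \<Rightarrow> 'v set) \<Rightarrow> 'w set \<Rightarrow> 'f set \<Rightarrow> ('f \<Rightarrow> 'w set) \<Rightarrow> bool" where
  "mg_iso V1 E1 ends1 V2 E2 ends2 \<longleftrightarrow> (\<exists>\<alpha> \<beta>. bij_betw \<alpha> V1 V2 \<and> bij_betw \<beta> E1 E2 \<and>
     (\<forall>e\<in>E1. ends2 (\<beta> e) = \<alpha> ` ends1 e))"

end

theory Submission
  imports Defs
begin

text \<open>
  A dual isomorphism is a bijection \<open>\<phi>\<close> between the edge sets that preserves meeting and
  parallelism. Three distinct pairwise meeting edges either share an endpoint or form a triangle.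

  If \<open>\<phi>\<close> preserves triangles, it maps the edges at a vertex \<open>v\<close> onto the edges at a vertex
  \<open>w\<close>: if the edges at \<open>v\<close> are all parallel, \<open>w\<close> is the endpoint of their images that carries
  no further edge; otherwise \<open>w\<close> is the unique common endpoint of the images of two non-parallel
  edges at \<open>v\<close>. With at least three vertices a vertex is determined by its incident edges, so
  \<open>v \<mapsto> w\<close> is the vertex bijection.

  Otherwise some triangle is mapped to a claw with centre \<open>w\<close> (or conversely). In a unicyclic
  graph no edge outside a triangle meets all three of its edges, so the claw contains every edge
  at \<open>w\<close>, and any other edge joins two leaves of the claw and closes a triangle with it. By
  uniqueness of the cycle there is exactly one such edge, and both graphs are the paw, a triangle
  with a pendant edge. Graphs with two vertices are isomorphic as soon as they have equally many
  edges.
\<close>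

lemma card_2_eq_doubleton: "card A = 2 \<Longrightarrow> x \<in> A \<Longrightarrow> y \<in> A \<Longrightarrow> x \<noteq> y \<Longrightarrow> A = {x, y}"
  by (auto simp: card_2_iff)

lemma card_2_obtain_other:
  assumes "card A = 2" "x \<in> A"
  obtains y where "A = {x, y}" "y \<noteq> x"
  using assms by (auto simp: card_2_iff)

lemma multigraph_card_ends: "multigraph V E ends \<Longrightarrow> e \<in> E \<Longrightarrow> card (ends e) = 2"
  by (simp add: multigraph_def)

lemma multigraph_ends_subset: "multigraph V E ends \<Longrightarrow> e \<in> E \<Longrightarrow> ends e \<subseteq> V"
  by (simp add: multigraph_def)

section \<open>Cycles and triangles\<close>

lemma mg_cycle_pair_iff:
  assumes mg: "multigraph V E ends" and "e \<in> E" "f \<in> E" "e \<noteq> f"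
  shows "mg_cycle E ends {e, f} \<longleftrightarrow> ends e = ends f"
proof
  assume "mg_cycle E ends {e, f}"
  then have two: "card {g \<in> {e, f}. v \<in> ends g} = 2" if "v \<in> ends e \<union> ends f" for v
    using that by (simp add: mg_cycle_def)
  have "v \<in> ends e \<and> v \<in> ends f" if "v \<in> ends e \<union> ends f" for v
  proof (rule ccontr)
    assume "\<not> (v \<in> ends e \<and> v \<in> ends f)"
    then obtain k where "{g \<in> {e, f}. v \<in> ends g} \<subseteq> {k}"
      by auto
    then have "card {g \<in> {e, f}. v \<in> ends g} \<le> 1"
      using card_mono[of "{k}"] by fastforce
    with two that show False by simp
  qed
  then show "ends e = ends f" by blast
next
  assume eq: "ends e = ends f"
  obtain u w where uw: "ends e = {u, w}" "u \<noteq> w"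
    using multigraph_card_ends[OF mg \<open>e \<in> E\<close>] by (auto simp: card_2_iff)
  have un: "\<Union>(ends ` {e, f}) = {u, w}"
    using eq uw by auto
  have "card {g \<in> {e, f}. v \<in> ends g} = 2" if "v \<in> {u, w}" for v
  proof -
    have "{g \<in> {e, f}. v \<in> ends g} = {e, f}"
      using that eq uw by auto
    then show ?thesis using \<open>e \<noteq> f\<close> by simp
  qed
  moreover have "(v, v') \<in> (mg_adj {e, f} ends)\<^sup>*" if "v \<in> {u, w}" "v' \<in> {u, w}" for v v'
  proof (cases "v = v'")
    case False
    with that uw have "(v, v') \<in> mg_adj {e, f} ends"
      by (auto simp: mg_adj_def)
    then show ?thesis by simp
  qed simp
  ultimately show "mg_cycle E ends {e, f}"
    unfolding mg_cycle_def mg_connected_def un using \<open>e \<in> E\<close> \<open>f \<in> E\<close> by auto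
qed

definition triangle :: "('e \<Rightarrow> 'v set) \<Rightarrow> 'e \<Rightarrow> 'e \<Rightarrow> 'e \<Rightarrow> bool" where
  "triangle ends a b c \<longleftrightarrow> a \<noteq> b \<and> a \<noteq> c \<and> b \<noteq> c \<and>
     ends a \<inter> ends b \<noteq> {} \<and> ends a \<inter> ends c \<noteq> {} \<and> ends b \<inter> ends c \<noteq> {} \<and>
     ends a \<inter> ends b \<inter> ends c = {}"

lemma triangle_shape:
  assumes mg: "multigraph V E ends" and "a \<in> E" "b \<in> E" "c \<in> E" and tri: "triangle ends a b c"
  obtains p q r where "p \<noteq> q" "q \<noteq> r" "r \<noteq> p"
    "ends a = {p, q}" "ends b = {q, r}" "ends c = {r, p}"
proof -
  from tri obtain q where q: "q \<in> ends a" "q \<in> ends b"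
    by (auto simp: triangle_def)
  obtain p where p: "ends a = {q, p}" "p \<noteq> q"
    using card_2_obtain_other[OF multigraph_card_ends[OF mg \<open>a \<in> E\<close>] q(1)] .
  obtain r where r: "ends b = {q, r}" "r \<noteq> q"
    using card_2_obtain_other[OF multigraph_card_ends[OF mg \<open>b \<in> E\<close>] q(2)] .
  have pr: "p \<in> ends c" "r \<in> ends c" "p \<noteq> r"
    using tri p r q by (auto simp: triangle_def)
  then have "ends c = {r, p}"
    using card_2_eq_doubleton[OF multigraph_card_ends[OF mg \<open>c \<in> E\<close>]] by blast
  with p r pr(3) show thesis
    by (intro that[of p q r]) auto
qed

lemma triangle_not_parallel:
  "triangle ends a b c \<Longrightarrow> ends a \<noteq> ends b \<and> ends a \<noteq> ends c \<and> ends b \<noteq> ends c"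
  by (auto simp: triangle_def)

lemma triangle_of_claw_pair:
  assumes "ends g = {w, u}" "ends g' = {w, u'}" "ends h = {u, u'}" "distinct [w, u, u']"
    and "h \<noteq> g" "h \<noteq> g'"
  shows "triangle ends g g' h"
proof -
  have "g \<noteq> g'"
    using assms(1,2,4) by (auto simp: doubleton_eq_iff)
  with assms show ?thesis
    by (auto simp: triangle_def)
qed

lemma mg_cycle_triangle:
  assumes mg: "multigraph V E ends" and "a \<in> E" "b \<in> E" "c \<in> E" and tri: "triangle ends a b c"
  shows "mg_cycle E ends {a, b, c}"
proof -
  obtain p q r where s: "p \<noteq> q" "q \<noteq> r" "r \<noteq> p"
    "ends a = {p, q}" "ends b = {q, r}" "ends c = {r, p}"
    using triangle_shape[OF mg assms(2-5)] .
  have d: "a \<noteq> b" "a \<noteq> c" "b \<noteq> c"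
    using tri by (auto simp: triangle_def)
  have un: "\<Union>(ends ` {a, b, c}) = {p, q, r}"
    using s by auto
  have "card {g \<in> {a, b, c}. v \<in> ends g} = 2" if "v \<in> {p, q, r}" for v
  proof -
    from that consider "v = p" | "v = q" | "v = r" by blast
    then obtain g g' where "{g \<in> {a, b, c}. v \<in> ends g} = {g, g'}" "g \<noteq> g'"
    proof cases
      case 1 then show ?thesis using s d by (intro that[of a c]) auto
    next
      case 2 then show ?thesis using s d by (intro that[of a b]) auto
    next
      case 3 then show ?thesis using s d by (intro that[of b c]) auto
    qed
    then show ?thesis by simp
  qed
  moreover have "(v, v') \<in> (mg_adj {a, b, c} ends)\<^sup>*" if "v \<in> {p, q, r}" "v' \<in> {p, q, r}" for v v'
  proof (cases "v = v'")
    case False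
    with that s have "(v, v') \<in> mg_adj {a, b, c} ends"
      by (auto simp: mg_adj_def insert_commute)
    then show ?thesis by simp
  qed simp
  ultimately show ?thesis
    unfolding mg_cycle_def mg_connected_def un using assms(2-4) by auto
qed

lemma unicyclic_cycle_eq:
  "unicyclic E ends \<Longrightarrow> mg_cycle E ends C \<Longrightarrow> mg_cycle E ends C' \<Longrightarrow> C = C'"
  unfolding unicyclic_def by blast

lemma triangle_vertex_on_two_edges:
  assumes "multigraph V E ends" "a \<in> E" "b \<in> E" "c \<in> E" "triangle ends a b c"
    and "k \<in> {a, b, c}" "v \<in> ends k"
  shows "\<exists>k'\<in>{a, b, c}. k' \<noteq> k \<and> v \<in> ends k'"
proof -
  obtain p q r where "p \<noteq> q" "q \<noteq> r" "r \<noteq> p"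
    "ends a = {p, q}" "ends b = {q, r}" "ends c = {r, p}"
    using triangle_shape[OF assms(1-5)] .
  moreover have "a \<noteq> b" "a \<noteq> c" "b \<noteq> c"
    using assms(5) by (auto simp: triangle_def)
  ultimately show ?thesis
    using assms(6,7) by auto
qed

lemma unicyclic_triangle_no_edge_meeting_all:
  assumes mg: "multigraph V E ends" and uni: "unicyclic E ends"
    and abc: "a \<in> E" "b \<in> E" "c \<in> E" and tri: "triangle ends a b c"
    and h: "h \<in> E" "h \<notin> {a, b, c}"
    and meets: "ends h \<inter> ends a \<noteq> {}" "ends h \<inter> ends b \<noteq> {}" "ends h \<inter> ends c \<noteq> {}"
  shows False
proof -
  obtain p q r where s: "p \<noteq> q" "q \<noteq> r" "r \<noteq> p"
    "ends a = {p, q}" "ends b = {q, r}" "ends c = {r, p}"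
    using triangle_shape[OF mg abc tri] .
  obtain u v where uv: "ends h = {u, v}" "u \<noteq> v"
    using multigraph_card_ends[OF mg h(1)] by (auto simp: card_2_iff)
  have "ends h \<in> {ends a, ends b, ends c}"
    using meets s uv by auto
  then obtain k where k: "k \<in> {a, b, c}" "ends h = ends k"
    by blast
  then have "mg_cycle E ends {k, h}"
    using mg_cycle_pair_iff[OF mg] abc h by auto
  then have "{k, h} = {a, b, c}"
    using unicyclic_cycle_eq[OF uni] mg_cycle_triangle[OF mg abc tri] by blast
  with h(2) show False by blast
qed

definition incident_edges :: "'e set \<Rightarrow> ('e \<Rightarrow> 'v set) \<Rightarrow> 'v \<Rightarrow> 'e set" where
  "incident_edges E ends v = {e \<in> E. v \<in> ends e}"

lemma mg_connected_subset_closed: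
  assumes conn: "mg_connected V E ends" and "v \<in> V" "v \<in> K"
    and closed: "\<And>e. e \<in> E \<Longrightarrow> ends e \<inter> K \<noteq> {} \<Longrightarrow> ends e \<subseteq> K"
  shows "V \<subseteq> K"
proof
  fix u assume "u \<in> V"
  with conn \<open>v \<in> V\<close> have "(v, u) \<in> (mg_adj E ends)\<^sup>*"
    by (simp add: mg_connected_def)
  then show "u \<in> K"
  proof (induction rule: rtrancl_induct)
    case (step y z)
    then obtain e where "e \<in> E" "ends e = {y, z}"
      by (auto simp: mg_adj_def)
    with step.IH closed[of e] show ?case by blast
  qed (fact \<open>v \<in> K\<close>)
qed

lemma incident_edges_nonempty:
  assumes "mg_connected V E ends" "v \<in> V" "2 \<le> card V"
  shows "incident_edges E ends v \<noteq> {}"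
proof -
  have "\<not> V \<subseteq> {v}"
    using card_mono[of "{v}" V] \<open>2 \<le> card V\<close> by auto
  then obtain u where "u \<in> V" "u \<noteq> v"
    by blast
  then have "(v, u) \<in> (mg_adj E ends)\<^sup>*"
    using assms(1,2) by (simp add: mg_connected_def)
  with \<open>u \<noteq> v\<close> obtain z where "(v, z) \<in> mg_adj E ends"
    by (metis converse_rtranclE)
  then show ?thesis
    by (auto simp: mg_adj_def incident_edges_def)
qed

lemma incident_edges_inj:
  assumes mg: "multigraph V E ends" and conn: "mg_connected V E ends" and "3 \<le> card V"
    and "v \<in> V" "v' \<in> V" and eq: "incident_edges E ends v = incident_edges E ends v'"
  shows "v = v'"
proof (rule ccontr)
  assume "v \<noteq> v'"
  have "V \<subseteq> {v, v'}"
  proof (rule mg_connected_subset_closed[OF conn \<open>v \<in> V\<close>])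
    fix e assume "e \<in> E" "ends e \<inter> {v, v'} \<noteq> {}"
    with eq have "v \<in> ends e" "v' \<in> ends e"
      by (auto simp: incident_edges_def)
    then show "ends e \<subseteq> {v, v'}"
      using card_2_eq_doubleton[OF multigraph_card_ends[OF mg \<open>e \<in> E\<close>]] \<open>v \<noteq> v'\<close> by simp
  qed simp
  then have "card V \<le> card {v, v'}"
    by (intro card_mono) auto
  with \<open>v \<noteq> v'\<close> \<open>3 \<le> card V\<close> show False by simp
qed

lemma unicyclic_two_le_card:
  assumes mg: "multigraph V E ends" and "unicyclic E ends"
  shows "2 \<le> card V"
proof -
  obtain C where "mg_cycle E ends C"
    using \<open>unicyclic E ends\<close> by (auto simp: unicyclic_def)
  then obtain e where "e \<in> E"
    by (auto simp: mg_cycle_def)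
  with mg have "ends e \<subseteq> V" "card (ends e) = 2" "finite V"
    by (auto simp: multigraph_def)
  then show ?thesis
    using card_mono by metis
qed

section \<open>Small graphs\<close>

lemma mg_iso_two_vertices:
  assumes mg1: "multigraph V1 E1 ends1" and mg2: "multigraph V2 E2 ends2"
    and "bij_betw \<phi> E1 E2" and "card V1 = 2" and "card V2 = 2"
  shows "mg_iso V1 E1 ends1 V2 E2 ends2"
proof -
  have "finite V1" "finite V2"
    using mg1 mg2 by (auto simp: multigraph_def)
  then obtain \<alpha> where \<alpha>: "bij_betw \<alpha> V1 V2"
    using finite_same_card_bij assms(4,5) by metis
  have "ends1 e = V1" if "e \<in> E1" for e
    using card_subset_eq[OF \<open>finite V1\<close>] mg1 that assms(4) by (simp add: multigraph_def)
  moreover have "ends2 e = V2" if "e \<in> E2" for e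
    using card_subset_eq[OF \<open>finite V2\<close>] mg2 that assms(5) by (simp add: multigraph_def)
  ultimately have "\<forall>e\<in>E1. ends2 (\<phi> e) = \<alpha> ` ends1 e"
    using bij_betw_apply[OF \<open>bij_betw \<phi> E1 E2\<close>] bij_betw_imp_surj_on[OF \<alpha>] by simp
  with \<alpha> \<open>bij_betw \<phi> E1 E2\<close> show ?thesis
    unfolding mg_iso_def by blast
qed

definition is_paw :: "'v set \<Rightarrow> 'e set \<Rightarrow> ('e \<Rightarrow> 'v set) \<Rightarrow> bool" where
  "is_paw V E ends \<longleftrightarrow> (\<exists>t p q s e1 e2 e3 e4. V = {t, p, q, s} \<and> distinct [t, p, q, s] \<and>
     E = {e1, e2, e3, e4} \<and> distinct [e1, e2, e3, e4] \<and>
     ends e1 = {t, p} \<and> ends e2 = {t, q} \<and> ends e3 = {p, q} \<and> ends e4 = {t, s})"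

lemma is_pawI:
  "V = {t, p, q, s} \<Longrightarrow> distinct [t, p, q, s] \<Longrightarrow> E = {e1, e2, e3, e4} \<Longrightarrow>
   distinct [e1, e2, e3, e4] \<Longrightarrow> ends e1 = {t, p} \<Longrightarrow> ends e2 = {t, q} \<Longrightarrow>
   ends e3 = {p, q} \<Longrightarrow> ends e4 = {t, s} \<Longrightarrow> is_paw V E ends"
  unfolding is_paw_def by blast

lemma mg_iso_paws:
  assumes "is_paw V1 E1 ends1" and "is_paw V2 E2 ends2"
  shows "mg_iso V1 E1 ends1 V2 E2 ends2"
proof -
  obtain t p q s e1 e2 e3 e4 where G1: "V1 = {t, p, q, s}" "distinct [t, p, q, s]"
    "E1 = {e1, e2, e3, e4}" "distinct [e1, e2, e3, e4]"
    "ends1 e1 = {t, p}" "ends1 e2 = {t, q}" "ends1 e3 = {p, q}" "ends1 e4 = {t, s}"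
    using assms(1) unfolding is_paw_def by blast
  obtain t' p' q' s' f1 f2 f3 f4 where G2: "V2 = {t', p', q', s'}" "distinct [t', p', q', s']"
    "E2 = {f1, f2, f3, f4}" "distinct [f1, f2, f3, f4]"
    "ends2 f1 = {t', p'}" "ends2 f2 = {t', q'}" "ends2 f3 = {p', q'}" "ends2 f4 = {t', s'}"
    using assms(2) unfolding is_paw_def by blast
  define \<alpha> where "\<alpha> v = (if v = t then t' else if v = p then p' else if v = q then q' else s')" for v
  define \<beta> where "\<beta> e = (if e = e1 then f1 else if e = e2 then f2 else if e = e3 then f3 else f4)" for e
  have \<alpha>: "\<alpha> t = t'" "\<alpha> p = p'" "\<alpha> q = q'" "\<alpha> s = s'"
    using G1(2) by (auto simp: \<alpha>_def)
  have \<beta>: "\<beta> e1 = f1" "\<beta> e2 = f2" "\<beta> e3 = f3" "\<beta> e4 = f4"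
    using G1(4) by (auto simp: \<beta>_def)
  have "bij_betw \<alpha> V1 V2"
    using \<alpha> G1(1,2) G2(1,2) by (auto simp: bij_betw_def inj_on_def)
  moreover have "bij_betw \<beta> E1 E2"
    using \<beta> G1(3,4) G2(3,4) by (auto simp: bij_betw_def inj_on_def)
  moreover have "\<forall>e\<in>E1. ends2 (\<beta> e) = \<alpha> ` ends1 e"
    using G1(3,5-8) G2(5-8) \<alpha> \<beta> by auto
  ultimately show ?thesis
    unfolding mg_iso_def by blast
qed

lemma is_paw_triangle_pendant:
  assumes mg: "multigraph V E ends" and "card V = 4"
    and abc: "a \<in> E" "b \<in> E" "c \<in> E" and tri: "triangle ends a b c" and E: "E = {a, b, c, d}"
    and s: "s \<in> ends d" "s \<notin> ends a \<union> ends b \<union> ends c"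
  shows "is_paw V E ends"
proof -
  obtain p q r where pqr: "p \<noteq> q" "q \<noteq> r" "r \<noteq> p"
    "ends a = {p, q}" "ends b = {q, r}" "ends c = {r, p}"
    using triangle_shape[OF mg abc tri] .
  have "d \<in> E"
    using E by simp
  then obtain t where d: "ends d = {s, t}" "t \<noteq> s"
    using card_2_obtain_other[OF multigraph_card_ends[OF mg] s(1)] by blast
  have s_off: "s \<notin> {p, q, r}"
    using s(2) unfolding pqr(4-6) by blast
  have "a \<noteq> b" "a \<noteq> c" "b \<noteq> c"
    using tri by (auto simp: triangle_def)
  moreover have "d \<notin> {a, b, c}"
    using s by auto
  ultimately have distinct: "distinct [a, b, c, d]"
    by auto
  have "ends a \<subseteq> V" "ends b \<subseteq> V" "ends d \<subseteq> V"
    using multigraph_ends_subset[OF mg] abc \<open>d \<in> E\<close> by simp_all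
  then have "{p, q, r, s} \<subseteq> V" "t \<in> V"
    using pqr(4,5) d(1) by simp_all
  moreover have "card {p, q, r, s} = 4"
    using pqr(1-3) s_off by auto
  moreover have "finite V"
    using mg by (simp add: multigraph_def)
  ultimately have V: "V = {p, q, r, s}"
    using card_subset_eq \<open>card V = 4\<close> by metis
  with \<open>t \<in> V\<close> d(2) consider "t = p" | "t = q" | "t = r"
    by blast
  then show ?thesis
  proof cases
    case 1
    show ?thesis
      by (rule is_pawI[of V p q r s E a c b d]) (use 1 V E distinct pqr s_off d(1) in auto)
  next
    case 2
    show ?thesis
      by (rule is_pawI[of V q p r s E a b c d]) (use 2 V E distinct pqr s_off d(1) in auto)
  next
    case 3
    show ?thesis
      by (rule is_pawI[of V r q p s E b c a d]) (use 3 V E distinct pqr s_off d(1) in auto)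
  qed
qed

lemma is_paw_claw_plus_edge:
  assumes mg: "multigraph V E ends" and V: "V = {w, x, y, z}" and wxyz: "distinct [w, x, y, z]"
    and E: "E = {g1, g2, g3, h}"
    and claw: "ends g1 = {w, x}" "ends g2 = {w, y}" "ends g3 = {w, z}" and h: "ends h \<subseteq> {x, y, z}"
  shows "is_paw V E ends"
proof -
  have "h \<in> E"
    using E by simp
  then obtain u u' where uu': "ends h = {u, u'}" "u \<noteq> u'"
    using multigraph_card_ends[OF mg \<open>h \<in> E\<close>] by (auto simp: card_2_iff)
  have distinct: "distinct [g1, g2, g3, h]"
    using claw uu' h wxyz by (auto simp: doubleton_eq_iff)
  from uu' h consider "ends h = {x, y}" | "ends h = {y, z}" | "ends h = {x, z}"
    by (auto simp: insert_commute)
  then show ?thesis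
  proof cases
    case 1
    then show ?thesis
      by (intro is_pawI[of V w x y z E g1 g2 h g3]) (use V E claw wxyz distinct in auto)
  next
    case 2
    then show ?thesis
      by (intro is_pawI[of V w y z x E g2 g3 h g1]) (use V E claw wxyz distinct in auto)
  next
    case 3
    then show ?thesis
      by (intro is_pawI[of V w x z y E g1 g3 h g2]) (use V E claw wxyz distinct in auto)
  qed
qed

section \<open>Dual isomorphisms\<close>

definition triangle_preserving :: "'e set \<Rightarrow> ('e \<Rightarrow> 'v set) \<Rightarrow> ('f \<Rightarrow> 'w set) \<Rightarrow> ('e \<Rightarrow> 'f) \<Rightarrow> bool" where
  "triangle_preserving E1 ends1 ends2 \<phi> \<longleftrightarrow>
     (\<forall>a\<in>E1. \<forall>b\<in>E1. \<forall>c\<in>E1. triangle ends1 a b c \<longleftrightarrow> triangle ends2 (\<phi> a) (\<phi> b) (\<phi> c))"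

locale dual_isomorphism =
  fixes V1 :: "'v set" and E1 :: "'e set" and ends1 :: "'e \<Rightarrow> 'v set"
    and V2 :: "'w set" and E2 :: "'f set" and ends2 :: "'f \<Rightarrow> 'w set"
    and \<phi> :: "'e \<Rightarrow> 'f"
  assumes multigraph1: "multigraph V1 E1 ends1" and multigraph2: "multigraph V2 E2 ends2"
    and bij: "bij_betw \<phi> E1 E2"
    and meet_iff:
      "\<And>e f. e \<in> E1 \<Longrightarrow> f \<in> E1 \<Longrightarrow> ends1 e \<inter> ends1 f \<noteq> {} \<longleftrightarrow> ends2 (\<phi> e) \<inter> ends2 (\<phi> f) \<noteq> {}"
    and parallel_iff:
      "\<And>e f. e \<in> E1 \<Longrightarrow> f \<in> E1 \<Longrightarrow> ends1 e = ends1 f \<longleftrightarrow> ends2 (\<phi> e) = ends2 (\<phi> f)"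
begin

abbreviation \<psi> :: "'f \<Rightarrow> 'e" where
  "\<psi> \<equiv> inv_into E1 \<phi>"

lemma \<phi>_in: "e \<in> E1 \<Longrightarrow> \<phi> e \<in> E2"
  using bij_betw_apply[OF bij] .

lemma \<psi>_in: "f \<in> E2 \<Longrightarrow> \<psi> f \<in> E1"
  using bij_betw_apply[OF bij_betw_inv_into[OF bij]] .

lemma \<phi>_\<psi>: "f \<in> E2 \<Longrightarrow> \<phi> (\<psi> f) = f"
  using bij_betw_inv_into_right[OF bij] .

lemma \<psi>_\<phi>: "e \<in> E1 \<Longrightarrow> \<psi> (\<phi> e) = e"
  using bij_betw_inv_into_left[OF bij] .

lemma \<phi>_eq_iff: "e \<in> E1 \<Longrightarrow> f \<in> E1 \<Longrightarrow> \<phi> e = \<phi> f \<longleftrightarrow> e = f"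
  using inj_on_eq_iff[OF bij_betw_imp_inj_on[OF bij]] .

lemma inverse: "dual_isomorphism V2 E2 ends2 V1 E1 ends1 \<psi>"
proof
  fix e f assume "e \<in> E2" "f \<in> E2"
  then show "ends2 e \<inter> ends2 f \<noteq> {} \<longleftrightarrow> ends1 (\<psi> e) \<inter> ends1 (\<psi> f) \<noteq> {}"
    and "ends2 e = ends2 f \<longleftrightarrow> ends1 (\<psi> e) = ends1 (\<psi> f)"
    using meet_iff[of "\<psi> e" "\<psi> f"] parallel_iff[of "\<psi> e" "\<psi> f"] \<psi>_in \<phi>_\<psi> by simp_all
qed (use multigraph1 multigraph2 bij_betw_inv_into[OF bij] in simp_all)

lemma triangle_preserving_inverse:
  assumes "triangle_preserving E1 ends1 ends2 \<phi>"
  shows "triangle_preserving E2 ends2 ends1 \<psi>"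
  unfolding triangle_preserving_def
proof (intro ballI)
  fix a b c assume "a \<in> E2" "b \<in> E2" "c \<in> E2"
  with assms show "triangle ends2 a b c \<longleftrightarrow> triangle ends1 (\<psi> a) (\<psi> b) (\<psi> c)"
    unfolding triangle_preserving_def using \<psi>_in \<phi>_\<psi> by metis
qed

lemma common_end_preserved:
  assumes tp: "triangle_preserving E1 ends1 ends2 \<phi>"
    and abc: "a \<in> E1" "b \<in> E1" "c \<in> E1" "a \<noteq> b" "a \<noteq> c" "b \<noteq> c"
    and common: "ends1 a \<inter> ends1 b \<inter> ends1 c \<noteq> {}"
  shows "ends2 (\<phi> a) \<inter> ends2 (\<phi> b) \<inter> ends2 (\<phi> c) \<noteq> {}"
proof -
  have "\<not> triangle ends1 a b c"
    using common by (simp add: triangle_def)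
  with tp abc have "\<not> triangle ends2 (\<phi> a) (\<phi> b) (\<phi> c)"
    by (simp add: triangle_preserving_def)
  moreover have "\<phi> a \<noteq> \<phi> b" "\<phi> a \<noteq> \<phi> c" "\<phi> b \<noteq> \<phi> c"
    using abc \<phi>_eq_iff by simp_all
  moreover have "ends2 (\<phi> a) \<inter> ends2 (\<phi> b) \<noteq> {}" "ends2 (\<phi> a) \<inter> ends2 (\<phi> c) \<noteq> {}"
      "ends2 (\<phi> b) \<inter> ends2 (\<phi> c) \<noteq> {}"
    using common meet_iff abc by blast+
  ultimately show ?thesis
    by (simp add: triangle_def)
qed

lemma preimage_through_other_end:
  assumes e: "e \<in> E1" "ends1 e = {v, u}" and k: "k \<in> E2" "v \<notin> ends1 (\<psi> k)"
    and meets: "ends2 k \<inter> ends2 (\<phi> e) \<noteq> {}"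
  shows "u \<in> ends1 (\<psi> k)" "ends2 k \<noteq> ends2 (\<phi> e)"
proof -
  have "ends1 (\<psi> k) \<inter> ends1 e \<noteq> {}"
    using meet_iff[OF \<psi>_in[OF k(1)] e(1)] \<phi>_\<psi>[OF k(1)] meets by simp
  with e(2) k(2) show "u \<in> ends1 (\<psi> k)"
    by auto
  have "ends1 (\<psi> k) \<noteq> ends1 e"
    using e(2) k(2) by auto
  then show "ends2 k \<noteq> ends2 (\<phi> e)"
    using parallel_iff[OF \<psi>_in[OF k(1)] e(1)] \<phi>_\<psi>[OF k(1)] by simp
qed

lemma incident_edges_image_parallel_class:
  assumes tp: "triangle_preserving E1 ends1 ends2 \<phi>"
    and e: "e \<in> incident_edges E1 ends1 v"
    and parallel: "\<And>f. f \<in> incident_edges E1 ends1 v \<Longrightarrow> ends1 f = ends1 e"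
  shows "\<exists>w\<in>V2. \<phi> ` incident_edges E1 ends1 v = incident_edges E2 ends2 w"
proof -
  let ?S = "incident_edges E1 ends1 v"
  have eE: "e \<in> E1" and "v \<in> ends1 e"
    using e by (auto simp: incident_edges_def)
  obtain u where u: "ends1 e = {v, u}" "u \<noteq> v"
    using card_2_obtain_other[OF multigraph_card_ends[OF multigraph1 eE] \<open>v \<in> ends1 e\<close>] .
  obtain x y where xy: "ends2 (\<phi> e) = {x, y}" "x \<noteq> y"
    using multigraph_card_ends[OF multigraph2 \<phi>_in[OF eE]] by (auto simp: card_2_iff)
  have "ends2 (\<phi> f) = {x, y}" if "f \<in> ?S" for f
    using parallel[OF that] parallel_iff[of f e] that eE xy(1) by (simp add: incident_edges_def)
  then have "\<phi> ` ?S \<subseteq> incident_edges E2 ends2 x" "\<phi> ` ?S \<subseteq> incident_edges E2 ends2 y"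
    using \<phi>_in by (auto simp: incident_edges_def)
  moreover have "incident_edges E2 ends2 x \<subseteq> \<phi> ` ?S \<or> incident_edges E2 ends2 y \<subseteq> \<phi> ` ?S"
  proof (rule ccontr)
    assume "\<not> ?thesis"
    then obtain g h where g: "g \<in> E2" "x \<in> ends2 g" "g \<notin> \<phi> ` ?S"
      and h: "h \<in> E2" "y \<in> ends2 h" "h \<notin> \<phi> ` ?S"
      by (auto simp: incident_edges_def)
    have avoid: "v \<notin> ends1 (\<psi> k)" if "k \<in> E2" "k \<notin> \<phi> ` ?S" for k
      using that \<phi>_\<psi> \<psi>_in by (force simp: incident_edges_def)
    have g': "u \<in> ends1 (\<psi> g)" "y \<notin> ends2 g"
      using preimage_through_other_end[OF eE u(1) g(1) avoid[OF g(1,3)]] g(2) xy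
        card_2_eq_doubleton[OF multigraph_card_ends[OF multigraph2 g(1)] g(2)] by auto
    have h': "u \<in> ends1 (\<psi> h)" "x \<notin> ends2 h"
      using preimage_through_other_end[OF eE u(1) h(1) avoid[OF h(1,3)]] h(2) xy
        card_2_eq_doubleton[OF multigraph_card_ends[OF multigraph2 h(1)] _ h(2)] by auto
    have "\<psi> g \<noteq> \<psi> h"
      using g(2) h'(2) \<phi>_\<psi> g(1) h(1) by metis
    moreover have "\<psi> g \<noteq> e" "\<psi> h \<noteq> e"
      using avoid[OF g(1,3)] avoid[OF h(1,3)] \<open>v \<in> ends1 e\<close> by auto
    ultimately have "ends2 (\<phi> e) \<inter> ends2 (\<phi> (\<psi> g)) \<inter> ends2 (\<phi> (\<psi> h)) \<noteq> {}"
      using common_end_preserved[OF tp eE \<psi>_in[OF g(1)] \<psi>_in[OF h(1)]] g'(1) h'(1) u(1) by auto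
    then show False
      using xy(1) g'(2) h'(2) \<phi>_\<psi> g(1) h(1) by auto
  qed
  moreover have "x \<in> V2" "y \<in> V2"
    using multigraph_ends_subset[OF multigraph2 \<phi>_in[OF eE]] xy(1) by auto
  ultimately show ?thesis
    by blast
qed

lemma incident_edges_image_subset:
  assumes tp: "triangle_preserving E1 ends1 ends2 \<phi>"
    and ef: "e \<in> incident_edges E1 ends1 v" "f \<in> incident_edges E1 ends1 v" "ends1 e \<noteq> ends1 f"
    and w: "w \<in> ends2 (\<phi> e)" "w \<in> ends2 (\<phi> f)"
  shows "\<phi> ` incident_edges E1 ends1 v \<subseteq> incident_edges E2 ends2 w"
proof
  fix h' assume "h' \<in> \<phi> ` incident_edges E1 ends1 v"
  then obtain h where h: "h \<in> E1" "v \<in> ends1 h" "h' = \<phi> h"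
    by (auto simp: incident_edges_def)
  have eE: "e \<in> E1" "v \<in> ends1 e" and fE: "f \<in> E1" "v \<in> ends1 f"
    using ef by (auto simp: incident_edges_def)
  have "w \<in> ends2 (\<phi> h)"
  proof (cases "h = e \<or> h = f")
    case False
    with ef(3) h eE fE have "ends2 (\<phi> e) \<inter> ends2 (\<phi> f) \<inter> ends2 (\<phi> h) \<noteq> {}"
      by (intro common_end_preserved[OF tp]) auto
    then obtain z where z: "z \<in> ends2 (\<phi> e)" "z \<in> ends2 (\<phi> f)" "z \<in> ends2 (\<phi> h)"
      by blast
    \<comment> \<open>two non-parallel edges share at most one endpoint\<close>
    have "ends2 (\<phi> e) \<noteq> ends2 (\<phi> f)"
      using parallel_iff[OF eE(1) fE(1)] ef(3) by simp
    then have "z = w"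
      using card_2_eq_doubleton[OF multigraph_card_ends[OF multigraph2 \<phi>_in[OF eE(1)]]]
        card_2_eq_doubleton[OF multigraph_card_ends[OF multigraph2 \<phi>_in[OF fE(1)]]] z w by metis
    with z(3) show ?thesis by simp
  qed (use w in auto)
  with h show "h' \<in> incident_edges E2 ends2 w"
    using \<phi>_in by (simp add: incident_edges_def)
qed

lemma incident_edges_image:
  assumes tp: "triangle_preserving E1 ends1 ends2 \<phi>" and "incident_edges E1 ends1 v \<noteq> {}"
  shows "\<exists>w\<in>V2. \<phi> ` incident_edges E1 ends1 v = incident_edges E2 ends2 w"
proof -
  obtain e where e: "e \<in> incident_edges E1 ends1 v"
    using assms(2) by blast
  show ?thesis
  proof (cases "\<forall>f\<in>incident_edges E1 ends1 v. ends1 f = ends1 e")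
    case True
    then show ?thesis
      using incident_edges_image_parallel_class[OF tp e] by blast
  next
    case False
    then obtain f where f: "f \<in> incident_edges E1 ends1 v" "ends1 e \<noteq> ends1 f"
      by auto
    have eE: "e \<in> E1" "v \<in> ends1 e" and fE: "f \<in> E1" "v \<in> ends1 f"
      using e f by (auto simp: incident_edges_def)
    then obtain w where w: "w \<in> ends2 (\<phi> e)" "w \<in> ends2 (\<phi> f)"
      using meet_iff[OF eE(1) fE(1)] by blast
    interpret inv: dual_isomorphism V2 E2 ends2 V1 E1 ends1 \<psi>
      by (rule inverse)
    have "\<phi> e \<in> incident_edges E2 ends2 w" "\<phi> f \<in> incident_edges E2 ends2 w"
      using w eE fE \<phi>_in by (auto simp: incident_edges_def)
    moreover have "ends2 (\<phi> e) \<noteq> ends2 (\<phi> f)"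
      using parallel_iff[OF eE(1) fE(1)] f(2) by simp
    moreover have "v \<in> ends1 (\<psi> (\<phi> e))" "v \<in> ends1 (\<psi> (\<phi> f))"
      using eE fE \<psi>_\<phi> by simp_all
    ultimately have "\<psi> ` incident_edges E2 ends2 w \<subseteq> incident_edges E1 ends1 v"
      by (rule inv.incident_edges_image_subset[OF triangle_preserving_inverse[OF tp]])
    then have "incident_edges E2 ends2 w \<subseteq> \<phi> ` incident_edges E1 ends1 v"
      using \<phi>_\<psi> by (force simp: incident_edges_def)
    moreover have "\<phi> ` incident_edges E1 ends1 v \<subseteq> incident_edges E2 ends2 w"
      using incident_edges_image_subset[OF tp e f w] .
    moreover have "w \<in> V2"
      using w(1) multigraph_ends_subset[OF multigraph2 \<phi>_in[OF eE(1)]] by blast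
    ultimately show ?thesis
      by blast
  qed
qed

lemma mg_iso_if_incident_edges_correspond:
  assumes "bij_betw \<alpha> V1 V2"
    and incident: "\<And>v. v \<in> V1 \<Longrightarrow> \<phi> ` incident_edges E1 ends1 v = incident_edges E2 ends2 (\<alpha> v)"
  shows "mg_iso V1 E1 ends1 V2 E2 ends2"
proof -
  have "ends2 (\<phi> e) = \<alpha> ` ends1 e" if e: "e \<in> E1" for e
  proof -
    obtain u v where uv: "ends1 e = {u, v}" "u \<noteq> v"
      using multigraph_card_ends[OF multigraph1 e] by (auto simp: card_2_iff)
    then have "u \<in> V1" "v \<in> V1"
      using multigraph_ends_subset[OF multigraph1 e] by auto
    moreover have "e \<in> incident_edges E1 ends1 u" "e \<in> incident_edges E1 ends1 v"
      using e uv(1) by (auto simp: incident_edges_def)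
    ultimately have "\<alpha> u \<in> ends2 (\<phi> e)" "\<alpha> v \<in> ends2 (\<phi> e)"
      using incident by (force simp: incident_edges_def)+
    moreover have "\<alpha> u \<noteq> \<alpha> v"
      using bij_betw_imp_inj_on[OF \<open>bij_betw \<alpha> V1 V2\<close>] \<open>u \<in> V1\<close> \<open>v \<in> V1\<close> uv(2)
      by (auto dest: inj_onD)
    ultimately show ?thesis
      using card_2_eq_doubleton[OF multigraph_card_ends[OF multigraph2 \<phi>_in[OF e]]] uv(1) by simp
  qed
  with \<open>bij_betw \<alpha> V1 V2\<close> bij show ?thesis
    unfolding mg_iso_def by blast
qed

lemma incident_edges_correspondence:
  assumes tp: "triangle_preserving E1 ends1 ends2 \<phi>" and conn: "mg_connected V1 E1 ends1"
    and "3 \<le> card V1" and "card V1 = card V2"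
  obtains \<alpha> where "bij_betw \<alpha> V1 V2"
    "\<And>v. v \<in> V1 \<Longrightarrow> \<phi> ` incident_edges E1 ends1 v = incident_edges E2 ends2 (\<alpha> v)"
proof -
  define \<alpha> where
    "\<alpha> v = (SOME w. w \<in> V2 \<and> \<phi> ` incident_edges E1 ends1 v = incident_edges E2 ends2 w)" for v
  have \<alpha>: "\<alpha> v \<in> V2" "\<phi> ` incident_edges E1 ends1 v = incident_edges E2 ends2 (\<alpha> v)"
    if "v \<in> V1" for v
  proof -
    have "incident_edges E1 ends1 v \<noteq> {}"
      using incident_edges_nonempty[OF conn that] \<open>3 \<le> card V1\<close> by simp
    then have "\<exists>w. w \<in> V2 \<and> \<phi> ` incident_edges E1 ends1 v = incident_edges E2 ends2 w"
      using incident_edges_image[OF tp] by blast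
    then show "\<alpha> v \<in> V2" "\<phi> ` incident_edges E1 ends1 v = incident_edges E2 ends2 (\<alpha> v)"
      unfolding \<alpha>_def by (metis (mono_tags, lifting) someI_ex)+
  qed
  have "inj_on \<alpha> V1"
  proof (rule inj_onI)
    fix v v' assume "v \<in> V1" "v' \<in> V1" "\<alpha> v = \<alpha> v'"
    then have "\<phi> ` incident_edges E1 ends1 v = \<phi> ` incident_edges E1 ends1 v'"
      using \<alpha>(2) by metis
    then have "incident_edges E1 ends1 v = incident_edges E1 ends1 v'"
      using inj_on_image_eq_iff[OF bij_betw_imp_inj_on[OF bij]] by (auto simp: incident_edges_def)
    then show "v = v'"
      using incident_edges_inj[OF multigraph1 conn \<open>3 \<le> card V1\<close> \<open>v \<in> V1\<close> \<open>v' \<in> V1\<close>] by blast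
  qed
  moreover have "\<alpha> ` V1 = V2"
  proof (rule card_subset_eq)
    show "finite V2"
      using multigraph2 by (simp add: multigraph_def)
    show "\<alpha> ` V1 \<subseteq> V2"
      using \<alpha>(1) by blast
    show "card (\<alpha> ` V1) = card V2"
      using card_image[OF \<open>inj_on \<alpha> V1\<close>] \<open>card V1 = card V2\<close> by simp
  qed
  ultimately have "bij_betw \<alpha> V1 V2"
    by (rule bij_betw_imageI)
  then show thesis
    using that \<alpha>(2) by blast
qed

lemma mg_iso_if_triangle_preserving:
  assumes "triangle_preserving E1 ends1 ends2 \<phi>" "mg_connected V1 E1 ends1"
    and "3 \<le> card V1" "card V1 = card V2"
  shows "mg_iso V1 E1 ends1 V2 E2 ends2"
  using incident_edges_correspondence[OF assms] mg_iso_if_incident_edges_correspond by metis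

end

section \<open>A triangle mapped to a claw\<close>

locale triangle_to_claw = dual_isomorphism +
  fixes a b c w x y z
  assumes unicyclic1: "unicyclic E1 ends1" and unicyclic2: "unicyclic E2 ends2"
    and connected1: "mg_connected V1 E1 ends1" and connected2: "mg_connected V2 E2 ends2"
    and card_eq: "card V1 = card V2"
    and triangle_edges: "a \<in> E1" "b \<in> E1" "c \<in> E1" and triangle: "triangle ends1 a b c"
    and claw: "ends2 (\<phi> a) = {w, x}" "ends2 (\<phi> b) = {w, y}" "ends2 (\<phi> c) = {w, z}"
begin

lemma claw_distinct: "distinct [w, x, y, z]"
proof -
  have "card (ends2 (\<phi> k)) = 2" if "k \<in> {a, b, c}" for k
    using multigraph_card_ends[OF multigraph2 \<phi>_in] that triangle_edges by auto
  then have "w \<noteq> x" "w \<noteq> y" "w \<noteq> z"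
    using claw by fastforce+
  moreover have "ends2 (\<phi> a) \<noteq> ends2 (\<phi> b)" "ends2 (\<phi> a) \<noteq> ends2 (\<phi> c)" "ends2 (\<phi> b) \<noteq> ends2 (\<phi> c)"
    using triangle_not_parallel[OF triangle] parallel_iff triangle_edges by simp_all
  ultimately show ?thesis
    using claw by auto
qed

lemma claw_edge_of_leaf: "u \<in> {x, y, z} \<Longrightarrow> \<exists>k\<in>{a, b, c}. ends2 (\<phi> k) = {w, u}"
  using claw by auto

lemma edge_at_claw_center:
  assumes "h \<in> E2" "w \<in> ends2 h"
  shows "h \<in> {\<phi> a, \<phi> b, \<phi> c}"
proof (rule ccontr)
  assume "h \<notin> {\<phi> a, \<phi> b, \<phi> c}"
  then have "\<psi> h \<notin> {a, b, c}"
    using \<phi>_\<psi>[OF assms(1)] by auto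
  moreover have "ends1 (\<psi> h) \<inter> ends1 k \<noteq> {}" if "k \<in> {a, b, c}" for k
    using meet_iff[OF \<psi>_in[OF assms(1)], of k] that triangle_edges \<phi>_\<psi>[OF assms(1)] assms(2) claw
    by auto
  ultimately show False
    using unicyclic_triangle_no_edge_meeting_all[OF multigraph1 unicyclic1 triangle_edges triangle
        \<psi>_in[OF assms(1)]] by blast
qed

lemma edge_off_claw_center:
  assumes h: "h \<in> E2" "h \<notin> {\<phi> a, \<phi> b, \<phi> c}" and u: "u \<in> ends2 h" "u \<in> {x, y, z}"
  shows "ends2 h \<subseteq> {x, y, z}"
proof -
  have "w \<notin> ends2 h"
    using edge_at_claw_center h by blast
  obtain k where k: "k \<in> {a, b, c}" "ends2 (\<phi> k) = {w, u}"
    using claw_edge_of_leaf[OF u(2)] by blast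
  have kE: "k \<in> E1"
    using k(1) triangle_edges by auto
  \<comment> \<open>the preimage of \<open>h\<close> meets a second triangle edge, so \<open>h\<close> meets a second claw edge\<close>
  have "ends1 (\<psi> h) \<inter> ends1 k \<noteq> {}"
    using meet_iff[OF \<psi>_in[OF h(1)] kE] \<phi>_\<psi>[OF h(1)] k(2) u(1) by auto
  then obtain p where "p \<in> ends1 (\<psi> h)" "p \<in> ends1 k"
    by blast
  then obtain k' where k': "k' \<in> {a, b, c}" "k' \<noteq> k" "p \<in> ends1 k'"
    using triangle_vertex_on_two_edges[OF multigraph1 triangle_edges triangle k(1)] by blast
  have k'E: "k' \<in> E1"
    using k'(1) triangle_edges by auto
  have "ends2 h \<inter> ends2 (\<phi> k') \<noteq> {}"
    using meet_iff[OF \<psi>_in[OF h(1)] k'E] \<phi>_\<psi>[OF h(1)] \<open>p \<in> ends1 (\<psi> h)\<close> k'(3) by auto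
  moreover obtain u' where u': "u' \<in> {x, y, z}" "ends2 (\<phi> k') = {w, u'}"
    using k'(1) claw by auto
  ultimately have "u' \<in> ends2 h"
    using \<open>w \<notin> ends2 h\<close> by auto
  moreover have "u' \<noteq> u"
    using k(1,2) k'(1,2) u'(2) claw claw_distinct by (auto simp: doubleton_eq_iff)
  ultimately have "ends2 h = {u, u'}"
    using card_2_eq_doubleton[OF multigraph_card_ends[OF multigraph2 h(1)] u(1)] by blast
  with u(2) u'(1) show ?thesis
    by simp
qed

lemma claw_vertices: "V2 = {w, x, y, z}"
proof
  have claw_ends: "ends2 (\<phi> a) \<subseteq> V2" "ends2 (\<phi> b) \<subseteq> V2" "ends2 (\<phi> c) \<subseteq> V2"
    using multigraph_ends_subset[OF multigraph2 \<phi>_in] triangle_edges by auto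
  then show "{w, x, y, z} \<subseteq> V2"
    using claw by auto
  show "V2 \<subseteq> {w, x, y, z}"
  proof (rule mg_connected_subset_closed[OF connected2])
    show "w \<in> V2"
      using claw_ends(1) claw(1) by auto
    fix h assume h: "h \<in> E2" "ends2 h \<inter> {w, x, y, z} \<noteq> {}"
    show "ends2 h \<subseteq> {w, x, y, z}"
    proof (cases "h \<in> {\<phi> a, \<phi> b, \<phi> c}")
      case True
      then show ?thesis
        using claw by auto
    next
      case False
      then have "w \<notin> ends2 h"
        using edge_at_claw_center h(1) by blast
      then obtain u where "u \<in> ends2 h" "u \<in> {x, y, z}"
        using h(2) by blast
      then show ?thesis
        using edge_off_claw_center[OF h(1) False] by blast
    qed
  qed simp
qed

lemma card_vertices: "card V1 = 4" "card V2 = 4"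
  using claw_vertices claw_distinct card_eq by simp_all

lemma edge_off_claw_leaves:
  assumes "h \<in> E2" "h \<notin> {\<phi> a, \<phi> b, \<phi> c}"
  shows "ends2 h \<subseteq> {x, y, z}"
  using multigraph_ends_subset[OF multigraph2 assms(1)] edge_at_claw_center[OF assms(1)] assms(2)
    claw_vertices by blast

lemma edge_off_claw_closes_cycle:
  assumes h: "h \<in> E2" "h \<notin> {\<phi> a, \<phi> b, \<phi> c}"
  obtains g g' where "g \<in> {\<phi> a, \<phi> b, \<phi> c}" "g' \<in> {\<phi> a, \<phi> b, \<phi> c}" "mg_cycle E2 ends2 {g, g', h}"
proof -
  obtain u u' where uu': "ends2 h = {u, u'}" "u \<noteq> u'"
    using multigraph_card_ends[OF multigraph2 h(1)] by (auto simp: card_2_iff)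
  then have "u \<in> {x, y, z}" "u' \<in> {x, y, z}"
    using edge_off_claw_leaves[OF h] by auto
  then obtain g g' where g: "g \<in> {a, b, c}" "ends2 (\<phi> g) = {w, u}"
    and g': "g' \<in> {a, b, c}" "ends2 (\<phi> g') = {w, u'}"
    using claw_edge_of_leaf by meson
  have "distinct [w, u, u']"
    using uu'(2) \<open>u \<in> {x, y, z}\<close> \<open>u' \<in> {x, y, z}\<close> claw_distinct by auto
  then have "triangle ends2 (\<phi> g) (\<phi> g') h"
    using triangle_of_claw_pair[of ends2 "\<phi> g" w u "\<phi> g'" u' h] g g' uu'(1) h(2) by auto
  moreover have "\<phi> g \<in> E2" "\<phi> g' \<in> E2"
    using g(1) g'(1) triangle_edges \<phi>_in by auto
  ultimately show thesis
    using that[of "\<phi> g" "\<phi> g'"] mg_cycle_triangle[OF multigraph2 _ _ h(1)] g(1) g'(1) by blast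
qed

lemma edge_off_claw_unique:
  assumes h: "h \<in> E2" "h \<notin> {\<phi> a, \<phi> b, \<phi> c}" and h': "h' \<in> E2" "h' \<notin> {\<phi> a, \<phi> b, \<phi> c}"
  shows "h = h'"
proof -
  obtain g1 g2 where "mg_cycle E2 ends2 {g1, g2, h}"
    using edge_off_claw_closes_cycle[OF h] .
  moreover obtain g1' g2' where g': "g1' \<in> {\<phi> a, \<phi> b, \<phi> c}" "g2' \<in> {\<phi> a, \<phi> b, \<phi> c}"
    "mg_cycle E2 ends2 {g1', g2', h'}"
    using edge_off_claw_closes_cycle[OF h'] .
  ultimately have "h \<in> {g1', g2', h'}"
    using unicyclic_cycle_eq[OF unicyclic2] by blast
  with h(2) g'(1,2) show ?thesis
    by blast
qed

lemma pendant_edge: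
  obtains d s where "d \<in> E1" "s \<in> ends1 d" "s \<notin> ends1 a \<union> ends1 b \<union> ends1 c"
proof -
  obtain p q r where "p \<noteq> q" "q \<noteq> r" "r \<noteq> p"
    "ends1 a = {p, q}" "ends1 b = {q, r}" "ends1 c = {r, p}"
    using triangle_shape[OF multigraph1 triangle_edges triangle] .
  then have "card (ends1 a \<union> ends1 b \<union> ends1 c) = 3" "finite (ends1 a \<union> ends1 b \<union> ends1 c)"
    by (simp_all add: insert_commute)
  then have "\<not> V1 \<subseteq> ends1 a \<union> ends1 b \<union> ends1 c"
    using card_mono[of "ends1 a \<union> ends1 b \<union> ends1 c" V1] card_vertices(1) by linarith
  then obtain s where s: "s \<in> V1" "s \<notin> ends1 a \<union> ends1 b \<union> ends1 c"
    by blast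
  moreover obtain d where "d \<in> incident_edges E1 ends1 s"
    using incident_edges_nonempty[OF connected1 s(1)] card_vertices(1) by fastforce
  ultimately show thesis
    using that[of d s] by (simp add: incident_edges_def)
qed

lemma paws: "is_paw V1 E1 ends1 \<and> is_paw V2 E2 ends2"
proof
  obtain d s where d: "d \<in> E1" "s \<in> ends1 d" "s \<notin> ends1 a \<union> ends1 b \<union> ends1 c"
    by (rule pendant_edge)
  then have "d \<notin> {a, b, c}"
    by auto
  then have \<phi>d: "\<phi> d \<notin> {\<phi> a, \<phi> b, \<phi> c}"
    using \<phi>_eq_iff d(1) triangle_edges by auto
  have E2: "E2 = {\<phi> a, \<phi> b, \<phi> c, \<phi> d}"
    using edge_off_claw_unique[OF _ _ \<phi>_in[OF d(1)] \<phi>d] \<phi>_in d(1) triangle_edges by blast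
  have "E1 = {a, b, c, d}"
  proof
    show "E1 \<subseteq> {a, b, c, d}"
    proof
      fix e assume "e \<in> E1"
      then have "\<phi> e \<in> {\<phi> a, \<phi> b, \<phi> c, \<phi> d}"
        using E2 \<phi>_in by blast
      then show "e \<in> {a, b, c, d}"
        using \<phi>_eq_iff[OF \<open>e \<in> E1\<close>] d(1) triangle_edges by auto
    qed
  qed (use d(1) triangle_edges in simp)
  then show "is_paw V1 E1 ends1"
    using is_paw_triangle_pendant[OF multigraph1 card_vertices(1) triangle_edges triangle _ d(2,3)] by blast
  show "is_paw V2 E2 ends2"
    using is_paw_claw_plus_edge[OF multigraph2 claw_vertices claw_distinct E2 claw
        edge_off_claw_leaves[OF \<phi>_in[OF d(1)] \<phi>d]] .
qed

end

context dual_isomorphism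
begin

lemma paws_if_triangle_to_claw:
  assumes "unicyclic E1 ends1" "unicyclic E2 ends2"
    and "mg_connected V1 E1 ends1" "mg_connected V2 E2 ends2" "card V1 = card V2"
    and abc: "a \<in> E1" "b \<in> E1" "c \<in> E1" and "triangle ends1 a b c"
    and "ends2 (\<phi> a) \<inter> ends2 (\<phi> b) \<inter> ends2 (\<phi> c) \<noteq> {}"
  shows "is_paw V1 E1 ends1 \<and> is_paw V2 E2 ends2"
proof -
  obtain w where w: "w \<in> ends2 (\<phi> a)" "w \<in> ends2 (\<phi> b)" "w \<in> ends2 (\<phi> c)"
    using assms(10) by blast
  obtain x y z where "ends2 (\<phi> a) = {w, x}" "ends2 (\<phi> b) = {w, y}" "ends2 (\<phi> c) = {w, z}"
    using card_2_obtain_other[OF multigraph_card_ends[OF multigraph2 \<phi>_in] w(1)]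
      card_2_obtain_other[OF multigraph_card_ends[OF multigraph2 \<phi>_in] w(2)]
      card_2_obtain_other[OF multigraph_card_ends[OF multigraph2 \<phi>_in] w(3)] abc by metis
  with assms have "triangle_to_claw V1 E1 ends1 V2 E2 ends2 \<phi> a b c w x y z"
    by (intro triangle_to_claw.intro triangle_to_claw_axioms.intro dual_isomorphism_axioms)
  then show ?thesis
    by (rule triangle_to_claw.paws)
qed

lemma mg_iso_if_not_triangle_preserving:
  assumes "\<not> triangle_preserving E1 ends1 ends2 \<phi>"
    and uni: "unicyclic E1 ends1" "unicyclic E2 ends2"
    and conn: "mg_connected V1 E1 ends1" "mg_connected V2 E2 ends2" and card: "card V1 = card V2"
  shows "mg_iso V1 E1 ends1 V2 E2 ends2"
proof -
  obtain a b c where abc: "a \<in> E1" "b \<in> E1" "c \<in> E1"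
    and differ: "triangle ends1 a b c \<noteq> triangle ends2 (\<phi> a) (\<phi> b) (\<phi> c)"
    using assms(1) unfolding triangle_preserving_def by blast
  \<comment> \<open>distinctness and pairwise meeting are preserved, so only the common endpoint can differ\<close>
  have "a \<noteq> b \<and> a \<noteq> c \<and> b \<noteq> c \<and>
      ends1 a \<inter> ends1 b \<noteq> {} \<and> ends1 a \<inter> ends1 c \<noteq> {} \<and> ends1 b \<inter> ends1 c \<noteq> {} \<longleftrightarrow>
    \<phi> a \<noteq> \<phi> b \<and> \<phi> a \<noteq> \<phi> c \<and> \<phi> b \<noteq> \<phi> c \<and> ends2 (\<phi> a) \<inter> ends2 (\<phi> b) \<noteq> {} \<and>
      ends2 (\<phi> a) \<inter> ends2 (\<phi> c) \<noteq> {} \<and> ends2 (\<phi> b) \<inter> ends2 (\<phi> c) \<noteq> {}"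
    using abc \<phi>_eq_iff meet_iff by simp
  with differ consider
      "triangle ends1 a b c" "ends2 (\<phi> a) \<inter> ends2 (\<phi> b) \<inter> ends2 (\<phi> c) \<noteq> {}"
    | "triangle ends2 (\<phi> a) (\<phi> b) (\<phi> c)" "ends1 a \<inter> ends1 b \<inter> ends1 c \<noteq> {}"
    unfolding triangle_def by blast
  then have "is_paw V1 E1 ends1 \<and> is_paw V2 E2 ends2"
  proof cases
    case 1
    then show ?thesis
      using paws_if_triangle_to_claw[OF uni conn card abc] by blast
  next
    case 2
    interpret inv: dual_isomorphism V2 E2 ends2 V1 E1 ends1 \<psi>
      by (rule inverse)
    have "ends1 (\<psi> (\<phi> a)) \<inter> ends1 (\<psi> (\<phi> b)) \<inter> ends1 (\<psi> (\<phi> c)) \<noteq> {}"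
      using 2(2) abc \<psi>_\<phi> by simp
    then have "is_paw V2 E2 ends2 \<and> is_paw V1 E1 ends1"
      using inv.paws_if_triangle_to_claw[OF uni(2,1) conn(2,1) card[symmetric]] \<phi>_in abc 2(1) by blast
    then show ?thesis
      by blast
  qed
  then show ?thesis
    using mg_iso_paws by blast
qed

end

lemma meet_iff_dual_adjacent:
  assumes mg: "multigraph V E ends" and "e \<in> E" "f \<in> E" "e \<noteq> f"
  shows "ends e \<inter> ends f \<noteq> {} \<longleftrightarrow> dual_solid E ends e f \<or> dual_dotted E ends e f"
  using assms mg_cycle_pair_iff[OF assms] multigraph_card_ends[OF mg \<open>e \<in> E\<close>]
  by (auto simp: dual_solid_def dual_dotted_def)

lemma parallel_iff_dual_dotted:
  assumes "multigraph V E ends" and "e \<in> E" "f \<in> E" "e \<noteq> f"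
  shows "ends e = ends f \<longleftrightarrow> dual_dotted E ends e f"
  using assms mg_cycle_pair_iff[OF assms] by (simp add: dual_dotted_def)

lemma dual_isomorphism_if_dual_iso:
  assumes mg1: "multigraph V1 E1 ends1" and mg2: "multigraph V2 E2 ends2"
    and "dual_iso E1 ends1 E2 ends2"
  obtains \<phi> where "dual_isomorphism V1 E1 ends1 V2 E2 ends2 \<phi>"
proof -
  obtain \<phi> where bij: "bij_betw \<phi> E1 E2" and pres: "\<forall>e\<in>E1. \<forall>f\<in>E1.
      (dual_solid E1 ends1 e f \<longleftrightarrow> dual_solid E2 ends2 (\<phi> e) (\<phi> f)) \<and>
      (dual_dotted E1 ends1 e f \<longleftrightarrow> dual_dotted E2 ends2 (\<phi> e) (\<phi> f))"
    using \<open>dual_iso E1 ends1 E2 ends2\<close> unfolding dual_iso_def by blast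
  have "dual_isomorphism V1 E1 ends1 V2 E2 ends2 \<phi>"
  proof
    fix e f assume ef: "e \<in> E1" "f \<in> E1"
    then have \<phi>ef: "\<phi> e \<in> E2" "\<phi> f \<in> E2"
      using bij_betw_apply[OF bij] by blast+
    show "ends1 e \<inter> ends1 f \<noteq> {} \<longleftrightarrow> ends2 (\<phi> e) \<inter> ends2 (\<phi> f) \<noteq> {}"
    proof (cases "e = f")
      case True
      then show ?thesis
        using multigraph_card_ends[OF mg1 ef(1)] multigraph_card_ends[OF mg2 \<phi>ef(1)] by auto
    next
      case False
      then have "\<phi> e \<noteq> \<phi> f"
        using ef inj_on_eq_iff[OF bij_betw_imp_inj_on[OF bij]] by blast
      then show ?thesis
        using meet_iff_dual_adjacent[OF mg1 ef False] meet_iff_dual_adjacent[OF mg2 \<phi>ef] pres ef by simp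
    qed
    show "ends1 e = ends1 f \<longleftrightarrow> ends2 (\<phi> e) = ends2 (\<phi> f)"
    proof (cases "e = f")
      case False
      then have "\<phi> e \<noteq> \<phi> f"
        using ef inj_on_eq_iff[OF bij_betw_imp_inj_on[OF bij]] by blast
      then show ?thesis
        using parallel_iff_dual_dotted[OF mg1 ef False] parallel_iff_dual_dotted[OF mg2 \<phi>ef] pres ef by simp
    qed simp
  qed (fact mg1 mg2 bij)+
  then show thesis
    by (rule that)
qed

theorem lemma6:
  fixes V1 :: "'v set" and E1 :: "'e set" and ends1 :: "'e \<Rightarrow> 'v set"
    and V2 :: "'w set" and E2 :: "'f set" and ends2 :: "'f \<Rightarrow> 'w set"
    and n :: nat
  assumes "multigraph V1 E1 ends1" and "mg_connected V1 E1 ends1"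
    and "unicyclic E1 ends1" and "card V1 = n"
    and "multigraph V2 E2 ends2" and "mg_connected V2 E2 ends2"
    and "unicyclic E2 ends2" and "card V2 = n"
    and "dual_iso E1 ends1 E2 ends2"
  shows "mg_iso V1 E1 ends1 V2 E2 ends2"
proof -
  obtain \<phi> where "dual_isomorphism V1 E1 ends1 V2 E2 ends2 \<phi>"
    using dual_isomorphism_if_dual_iso assms(1,5,9) by blast
  then interpret dual_isomorphism V1 E1 ends1 V2 E2 ends2 \<phi> .
  have card: "card V1 = card V2"
    using assms(4,8) by simp
  consider "card V1 = 2" | "3 \<le> card V1"
    using unicyclic_two_le_card[OF assms(1,3)] by linarith
  then show ?thesis
  proof cases
    case 1
    then show ?thesis
      using mg_iso_two_vertices[OF assms(1,5) bij] card by simp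
  next
    case 2
    show ?thesis
    proof (cases "triangle_preserving E1 ends1 ends2 \<phi>")
      case True
      then show ?thesis
        using mg_iso_if_triangle_preserving assms(2) 2 card by blast
    next
      case False
      then show ?thesis
        using mg_iso_if_not_triangle_preserving assms(3,7,2,6) card by blast
    qed
  qed
qed

end
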